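(* Let $R\ge1$, $\mathbf{x}=(x_1,\dots,x_R)$ pairwise distinct reals and $\mathbf{c}=(c_1,\dots,c_R)\in\mathbb{R}^R$. (a) If $\mathbf{u}=(u_1,\dots,u_R)^T\in\mathbb{C}^R$ is an eigenvector of $A(\mathbf{x})$ for the eigenvalue $i\mu$ ($\mu\in\mathbb{R}$), then for every $1\le n\le R$, $$\mu^2|u_n|^2=\sum_{m=1}^R a_{m,n}^2\big(|u_m|^2+2\,\Re(u_n\overline{u_m})\big).$$ (b) If $\mathbf{u}\in\mathbb{C}^R$ is an eigenvector of $B(\mathbf{x},\mathbf{c})$ for the eigenvalue $i\mu$ ($\mu\in\mathbb{R}$), then for every $1\le n\le R$, $$\mu^2|u_n|^2=\sum_{m=1}^R a_{m,n}^2\big(c_n^2c_m^2|u_m|^2+2\,c_n^3c_m\,\Re(u_n\overline{u_m})\big).$$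
   Context: $A(\mathbf{x})$ is the $R\times R$ matrix with entries $a_{m,m}=0$ and $a_{m,n}=\frac{1}{x_m-x_n}$ for $m\ne n$. $B(\mathbf{x},\mathbf{c})$ is the $R\times R$ matrix with entries $b_{m,n}=c_mc_na_{m,n}$. Both matrices are real antisymmetric, so their eigenvalues are purely imaginary. *)

theory Defs
  imports "HOL-Analysis.Analysis"
begin

text \<open>The matrix A(x): a_{m,m} = 0, a_{m,n} = 1/(x_m - x_n) for m \<noteq> n.
  Indices range over a finite type 'n with CARD('n) = R.\<close>
definition A_mat :: "real^'n \<Rightarrow> real^'n^'n" where
  "A_mat x = (\<chi> m n. if m = n then 0 else 1 / (x$m - x$n))"

definition B_mat :: "real^'n \<Rightarrow> real^'n \<Rightarrow> real^'n^'n" where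
  "B_mat x c = (\<chi> m n. c$m * c$n * (A_mat x)$m$n)"

definition cmat :: "real^'n^'m \<Rightarrow> complex^'n^'m" where
  "cmat M = (\<chi> i j. complex_of_real (M$i$j))"

definition is_eigvec :: "real^'n^'n \<Rightarrow> complex \<Rightarrow> complex^'n \<Rightarrow> bool" where
  "is_eigvec M ev u \<longleftrightarrow> u \<noteq> 0 \<and> cmat M *v u = ev *s u"

end

theory Submission
  imports Defs
begin

text \<open>Write \<open>B = C A C\<close> with \<open>C = diag c\<close>, put \<open>v = C u\<close> and \<open>w = A v\<close>, so that
  \<open>c\<^sub>m w\<^sub>m = i \<mu> u\<^sub>m\<close>; in particular \<open>v\<^sub>m \<overline>w\<^sub>m\<close> is purely imaginary for every \<open>m\<close>.
  Expanding \<open>|w\<^sub>n|\<^sup>2 = \<Sum>\<^sub>m\<^sub>,\<^sub>k a\<^sub>n\<^sub>m a\<^sub>n\<^sub>k v\<^sub>m \<overline>v\<^sub>k\<close> with the three-term identity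
  \<open>a\<^sub>n\<^sub>m a\<^sub>n\<^sub>k = a\<^sub>m\<^sub>k (a\<^sub>n\<^sub>m - a\<^sub>n\<^sub>k)\<close> for distinct \<open>n, m, k\<close> and antisymmetry, the off-diagonal
  part collapses to \<open>\<Sum>\<^sub>m a\<^sub>n\<^sub>m \<cdot> 2 Re (v\<^sub>m \<overline>w\<^sub>m) = 0\<close>, leaving only the diagonal terms.
  Multiplying by \<open>c\<^sub>n\<^sup>2\<close> gives (b); (a) is the case \<open>c = 1\<close>.\<close>

lemma three_term_identity_all_indices:
  fixes a :: "'a \<Rightarrow> 'a \<Rightarrow> real"
  assumes anti: "\<And>m k. a m k = - a k m"
    and three: "\<And>m k. m \<noteq> k \<Longrightarrow> m \<noteq> n \<Longrightarrow> k \<noteq> n \<Longrightarrow>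
                   a n m * a n k = a m k * (a n m - a n k)"
  shows "a n m * a n k = a m k * (a n m - a n k) + (if m = k then (a n m)^2 else 0)
           + (if m = n then (a n k)^2 else 0) + (if k = n then (a n m)^2 else 0)"
proof -
  have diag: "a i i = 0" for i
    using anti[of i i] by simp
  show ?thesis
    using three[of m k] anti[of m n] diag[of n]
    by (cases "m = k"; cases "m = n"; cases "k = n") (auto simp: power2_eq_square algebra_simps)
qed

lemma antisym_weighted_form:
  fixes a :: "'n::finite \<Rightarrow> 'n \<Rightarrow> real" and b :: "'n \<Rightarrow> real" and v :: "'n \<Rightarrow> complex"
  assumes anti: "\<And>m k. a m k = - a k m"
  defines "w \<equiv> \<lambda>m. \<Sum>k\<in>UNIV. of_real (a m k) * v k"
  shows "(\<Sum>m\<in>UNIV. \<Sum>k\<in>UNIV. of_real (a m k * (b m - b k)) * v m * cnj (v k))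
           = (\<Sum>m\<in>UNIV. of_real (2 * b m * Re (v m * cnj (w m))))"
proof -
  have w_transpose: "(\<Sum>m\<in>UNIV. of_real (a m k) * v m) = - w k" for k
    unfolding w_def by (subst anti) (simp add: sum_negf)
  have first: "(\<Sum>m\<in>UNIV. \<Sum>k\<in>UNIV. of_real (a m k * b m) * v m * cnj (v k))
        = (\<Sum>m\<in>UNIV. of_real (b m) * v m * cnj (w m))"
    unfolding w_def by (simp add: cnj_sum sum_distrib_left mult_ac)
  have second: "(\<Sum>m\<in>UNIV. \<Sum>k\<in>UNIV. of_real (a m k * b k) * v m * cnj (v k))
        = (\<Sum>k\<in>UNIV. of_real (b k) * cnj (v k) * (\<Sum>m\<in>UNIV. of_real (a m k) * v m))"
    by (subst sum.swap) (simp add: sum_distrib_left mult_ac)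
  have "(\<Sum>m\<in>UNIV. \<Sum>k\<in>UNIV. of_real (a m k * (b m - b k)) * v m * cnj (v k))
        = (\<Sum>m\<in>UNIV. \<Sum>k\<in>UNIV. of_real (a m k * b m) * v m * cnj (v k))
          - (\<Sum>m\<in>UNIV. \<Sum>k\<in>UNIV. of_real (a m k * b k) * v m * cnj (v k))"
    by (simp add: sum_subtractf[symmetric] algebra_simps)
  also have "\<dots> = (\<Sum>m\<in>UNIV. of_real (b m) * v m * cnj (w m))
          - (\<Sum>k\<in>UNIV. of_real (b k) * cnj (v k) * (\<Sum>m\<in>UNIV. of_real (a m k) * v m))"
    by (simp only: first second)
  also have "\<dots> = (\<Sum>m\<in>UNIV. of_real (b m) * (v m * cnj (w m) + cnj (v m * cnj (w m))))"
    unfolding w_transpose by (simp add: sum_subtractf[symmetric] algebra_simps)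
  also have "\<dots> = (\<Sum>m\<in>UNIV. of_real (2 * b m * Re (v m * cnj (w m))))"
    by (intro sum.cong refl) (simp add: complex_add_cnj complex_eq_iff)
  finally show ?thesis .
qed

lemma norm_square_of_antisym_image:
  fixes a :: "'n::finite \<Rightarrow> 'n \<Rightarrow> real" and v :: "'n \<Rightarrow> complex" and n :: 'n
  assumes anti: "\<And>m k. a m k = - a k m"
    and three: "\<And>m k. m \<noteq> k \<Longrightarrow> m \<noteq> n \<Longrightarrow> k \<noteq> n \<Longrightarrow>
                   a n m * a n k = a m k * (a n m - a n k)"
  defines "w \<equiv> \<lambda>m. \<Sum>k\<in>UNIV. of_real (a m k) * v k"
  assumes orth: "\<And>m. Re (v m * cnj (w m)) = 0"
  shows "(cmod (w n))^2 = (\<Sum>m\<in>UNIV. (a n m)^2 * (cmod (v m))^2)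
           + 2 * Re (v n * (\<Sum>k\<in>UNIV. of_real ((a n k)^2) * cnj (v k)))"
proof -
  define D where "D = (\<Sum>m\<in>UNIV. of_real ((a n m)^2) * (v m * cnj (v m)))"
  define E where "E = v n * (\<Sum>k\<in>UNIV. of_real ((a n k)^2) * cnj (v k))"
  have "w n * cnj (w n) = (\<Sum>m\<in>UNIV. \<Sum>k\<in>UNIV. of_real (a n m * a n k) * v m * cnj (v k))"
    unfolding w_def by (simp add: cnj_sum sum_product mult_ac)
  also have "\<dots> = (\<Sum>m\<in>UNIV. \<Sum>k\<in>UNIV. of_real (a m k * (a n m - a n k)) * v m * cnj (v k)
          + (if m = k then of_real ((a n m)^2) * (v m * cnj (v m)) else 0)
          + (if m = n then v n * (of_real ((a n k)^2) * cnj (v k)) else 0)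
          + (if k = n then cnj (v n) * (of_real ((a n m)^2) * v m) else 0))"
    by (intro sum.cong refl, subst three_term_identity_all_indices[of a n, OF anti three])
       (auto simp: algebra_simps)
  also have "\<dots> = (\<Sum>m\<in>UNIV. \<Sum>k\<in>UNIV. of_real (a m k * (a n m - a n k)) * v m * cnj (v k))
                  + D + E + cnj E"
    unfolding D_def E_def
    by (simp add: sum.distrib sum.delta cnj_sum sum_distrib_left) (subst sum.swap, simp)
  also have "(\<Sum>m\<in>UNIV. \<Sum>k\<in>UNIV. of_real (a m k * (a n m - a n k)) * v m * cnj (v k)) = 0"
  proof -
    have "(\<Sum>m\<in>UNIV. \<Sum>k\<in>UNIV. of_real (a m k * (a n m - a n k)) * v m * cnj (v k))
          = (\<Sum>m\<in>UNIV. of_real (2 * a n m * Re (v m * cnj (w m))))"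
      unfolding w_def by (rule antisym_weighted_form[OF anti])
    then show ?thesis
      by (simp only: orth mult_zero_right of_real_0 sum.neutral_const)
  qed
  finally have norm_w: "complex_of_real ((cmod (w n))^2) = D + E + cnj E"
    by (simp only: complex_norm_square add_0_left)
  have "(cmod (w n))^2 = Re D + 2 * Re E"
    using arg_cong[where f = Re, OF norm_w] by simp
  moreover have "Re D = (\<Sum>m\<in>UNIV. (a n m)^2 * (cmod (v m))^2)"
    unfolding D_def Re_sum by (simp add: cmod_power2 flip: power2_eq_square)
  ultimately show ?thesis
    unfolding E_def by simp
qed

lemma A_mat_antisym:
  assumes "inj (\<lambda>i. x$i)"
  shows "A_mat x $ m $ k = - A_mat x $ k $ m"
  using assms by (auto simp: A_mat_def inj_eq divide_simps)

lemma A_mat_three_term: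
  assumes "inj (\<lambda>i. x$i)" and "m \<noteq> k" "m \<noteq> n" "k \<noteq> n"
  shows "A_mat x $ n $ m * A_mat x $ n $ k
           = A_mat x $ m $ k * (A_mat x $ n $ m - A_mat x $ n $ k)"
proof -
  have "x$n \<noteq> x$m" "x$n \<noteq> x$k" "x$m \<noteq> x$k"
    using assms by (auto simp: inj_eq)
  then show ?thesis
    using assms(2-4) by (simp add: A_mat_def field_simps)
qed

lemma B_mat_eigvec_norm_square:
  fixes x c :: "real^'n" and u :: "complex^'n" and \<mu> :: real
  assumes distinct: "inj (\<lambda>i. x$i)"
    and eigvec: "is_eigvec (B_mat x c) (\<i> * complex_of_real \<mu>) u"
  shows "\<mu>^2 * (cmod (u$n))^2 =
           (\<Sum>m\<in>UNIV. ((A_mat x)$m$n)^2 *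
              ((c$n)^2 * (c$m)^2 * (cmod (u$m))^2
               + 2 * (c$n)^3 * c$m * Re (u$n * cnj (u$m))))"
proof -
  define a where "a m k = A_mat x $ m $ k" for m k
  define v where "v k = complex_of_real (c$k) * u$k" for k
  define w where "w m = (\<Sum>k\<in>UNIV. of_real (a m k) * v k)" for m
  have anti: "a m k = - a k m" for m k
    unfolding a_def by (rule A_mat_antisym[OF distinct])
  have scaled_w: "of_real (c$m) * w m = \<i> * of_real \<mu> * u$m" for m
  proof -
    have "(cmat (B_mat x c) *v u) $ m = ((\<i> * of_real \<mu>) *s u) $ m"
      using eigvec unfolding is_eigvec_def by simp
    then show ?thesis
      by (simp add: matrix_vector_mult_def cmat_def B_mat_def a_def w_def v_def
          sum_distrib_left mult_ac)
  qed
  have orth: "Re (v m * cnj (w m)) = 0" for m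
  proof -
    have "v m * cnj (w m) = u$m * cnj (of_real (c$m) * w m)"
      by (simp add: v_def)
    also have "\<dots> = - \<i> * of_real \<mu> * (u$m * cnj (u$m))"
      unfolding scaled_w by (simp add: mult_ac)
    also have "\<dots> = - \<i> * of_real (\<mu> * (cmod (u$m))^2)"
      by (simp add: complex_norm_square[symmetric] mult_ac)
    finally show ?thesis
      by simp
  qed
  have norm_w: "(cmod (w n))^2 = (\<Sum>m\<in>UNIV. (a n m)^2 * (cmod (v m))^2)
      + 2 * Re (v n * (\<Sum>k\<in>UNIV. of_real ((a n k)^2) * cnj (v k)))"
    unfolding w_def
    by (rule norm_square_of_antisym_image[OF anti _ orth[unfolded w_def]])
       (simp add: a_def A_mat_three_term[OF distinct])
  have "\<mu>^2 * (cmod (u$n))^2 = (cmod (of_real (c$n) * w n))^2"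
    by (simp add: scaled_w norm_mult power_mult_distrib)
  also have "\<dots> = (c$n)^2 * (cmod (w n))^2"
    by (simp add: norm_mult power_mult_distrib)
  also have "\<dots> = (c$n)^2 * ((\<Sum>m\<in>UNIV. (a n m)^2 * (c$m)^2 * (cmod (u$m))^2)
      + 2 * (\<Sum>m\<in>UNIV. (a n m)^2 * c$n * c$m * Re (u$n * cnj (u$m))))"
  proof -
    have "Re (v n * (\<Sum>k\<in>UNIV. of_real ((a n k)^2) * cnj (v k)))
          = (\<Sum>k\<in>UNIV. (a n k)^2 * c$n * c$k * Re (u$n * cnj (u$k)))"
      by (simp add: v_def sum_distrib_left Re_sum algebra_simps)
    then show ?thesis
      unfolding norm_w by (simp add: v_def norm_mult power_mult_distrib mult_ac)
  qed
  also have "\<dots> = (\<Sum>m\<in>UNIV. (a m n)^2 *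
      ((c$n)^2 * (c$m)^2 * (cmod (u$m))^2 + 2 * (c$n)^3 * c$m * Re (u$n * cnj (u$m))))"
  proof -
    have "(a n m)^2 = (a m n)^2" for m
      using anti[of n m] by simp
    then show ?thesis
      by (simp add: sum_distrib_left sum.distrib[symmetric] power3_eq_cube power2_eq_square
          algebra_simps)
  qed
  finally show ?thesis
    by (simp add: a_def)
qed

theorem lemma5:
  fixes x c :: "real^'n"
  assumes distinct: "inj (\<lambda>i. x$i)"
  shows "(\<forall>(u::complex^'n) (\<mu>::real) n.
            is_eigvec (A_mat x) (\<i> * complex_of_real \<mu>) u \<longrightarrow>
            \<mu>^2 * (cmod (u$n))^2 =
              (\<Sum>m\<in>UNIV. ((A_mat x)$m$n)^2 *
                 ((cmod (u$m))^2 + 2 * Re (u$n * cnj (u$m)))))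
       \<and> (\<forall>(u::complex^'n) (\<mu>::real) n.
            is_eigvec (B_mat x c) (\<i> * complex_of_real \<mu>) u \<longrightarrow>
            \<mu>^2 * (cmod (u$n))^2 =
              (\<Sum>m\<in>UNIV. ((A_mat x)$m$n)^2 *
                 ((c$n)^2 * (c$m)^2 * (cmod (u$m))^2
                  + 2 * (c$n)^3 * c$m * Re (u$n * cnj (u$m)))))"
proof (intro conjI allI impI)
  fix u :: "complex^'n" and \<mu> :: real and n
  assume "is_eigvec (A_mat x) (\<i> * complex_of_real \<mu>) u"
  moreover have "B_mat x 1 = A_mat x"
    by (simp add: B_mat_def vec_eq_iff)
  ultimately show "\<mu>^2 * (cmod (u$n))^2 =
      (\<Sum>m\<in>UNIV. ((A_mat x)$m$n)^2 * ((cmod (u$m))^2 + 2 * Re (u$n * cnj (u$m))))"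
    using B_mat_eigvec_norm_square[OF distinct, of 1 \<mu> u n] by simp
qed (rule B_mat_eigvec_norm_square[OF distinct])

end
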